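(* Let $\mathcal{F}$ be a $3$-uniform linear family and let $\mathcal{M}$ be a matching (not necessarily maximum) of $\mathcal{F}$ with $n=|\mathcal{M}|\geq 3$. If $|D_2(A,B,C)|\leq 21$ for all $3$-element subsets $\{A,B,C\}\subseteq\mathcal{M}$, then $|D_2(\mathcal{F},\mathcal{M})|+|D_3(\mathcal{F},\mathcal{M})\setminus\mathcal{M}|\leq\frac{23}{n-2}\binom{n}{3}$.
   Context: A family is a finite collection of distinct subsets of a vertex set; $3$-uniform means every member has exactly $3$ elements and linear means any two distinct members share at most one vertex. A matching is a collection of pairwise disjoint members. $X_{\mathcal{M}}=\bigcup_{A\in\mathcal{M}}A$. For $i\in\{0,1,2,3\}$, $D_i(\mathcal{F},\mathcal{M})=\{E\in\mathcal{F}:|E\cap X_{\mathcal{M}}|=i\}$. For $\{A,B,C\}\subseteq\mathcal{M}$, $D_2(A,B,C)=\{E\in D_2(\mathcal{F},\mathcal{M}):|E\cap(A\cup B\cup C)|=2\}$. *)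

theory Defs
  imports Complex_Main
begin

definition uniform3 :: "'a set set \<Rightarrow> bool" where
  "uniform3 F \<longleftrightarrow> (\<forall>E\<in>F. card E = 3)"

definition linear_family :: "'a set set \<Rightarrow> bool" where
  "linear_family F \<longleftrightarrow> (\<forall>E\<in>F. \<forall>E'\<in>F. E \<noteq> E' \<longrightarrow> card (E \<inter> E') \<le> 1)"

definition is_matching :: "'a set set \<Rightarrow> 'a set set \<Rightarrow> bool" where
  "is_matching F M \<longleftrightarrow> M \<subseteq> F \<and> (\<forall>A\<in>M. \<forall>B\<in>M. A \<noteq> B \<longrightarrow> A \<inter> B = {})"

definition XM :: "'a set set \<Rightarrow> 'a set" where
  "XM M = \<Union>M"

definition D :: "nat \<Rightarrow> 'a set set \<Rightarrow> 'a set set \<Rightarrow> 'a set set" where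
  "D i F M = {E\<in>F. card (E \<inter> XM M) = i}"

definition D2_triple :: "'a set set \<Rightarrow> 'a set set \<Rightarrow> 'a set \<Rightarrow> 'a set \<Rightarrow> 'a set \<Rightarrow> 'a set set" where
  "D2_triple F M A B C = {E\<in>D 2 F M. card (E \<inter> (A \<union> B \<union> C)) = 2}"

end

theory Submission
  imports Defs
begin

text \<open>Let \<open>X\<close> be the set of vertices covered by \<open>\<M>\<close>. In a linear family two members share
  no pair of vertices, so the pairs inside the traces \<open>E \<inter> X\<close> are all distinct pairs of \<open>X\<close>:
  the members of \<open>\<M>\<close> account for \<open>3n\<close> of them, each member of \<open>D\<^sub>2\<close> for one and each member
  of \<open>D\<^sub>3 - \<M>\<close> for three, whence \<open>|D\<^sub>2| + 3|D\<^sub>3 - \<M>| \<le> C(3n,2) - 3n = 9n(n-1)/2\<close>.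
  A member of \<open>D\<^sub>2\<close> meets two distinct members \<open>A, B\<close> of \<open>\<M>\<close>, so it lies in \<open>D\<^sub>2(A,B,C)\<close>
  for exactly the \<open>n - 2\<close> choices of \<open>C\<close>; double counting gives \<open>(n-2)|D\<^sub>2| \<le> 21 C(n,3)\<close>,
  i.e. \<open>|D\<^sub>2| \<le> 7n(n-1)/2\<close>. A third of the first bound plus two thirds of the second is
  \<open>|D\<^sub>2| + |D\<^sub>3 - \<M>| \<le> 23n(n-1)/6 = 23 C(n,3)/(n-2)\<close>.\<close>

lemma linear_family_sum_choose_two_le:
  assumes "linear_family F" and "finite F" and "\<And>E. E \<in> F \<Longrightarrow> finite E" and "finite X"
  shows "(\<Sum>E\<in>F. card (E \<inter> X) choose 2) \<le> card X choose 2"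
proof -
  define pairs where "pairs S = {p. p \<subseteq> S \<and> card p = 2}" for S :: "'a set"
  have finite_pairs: "finite (pairs S)" if "S \<subseteq> X" for S
    using \<open>finite X\<close> that unfolding pairs_def
    by (auto intro: finite_subset[of _ "Pow X"])
  have card_pairs: "card (pairs S) = card S choose 2" if "S \<subseteq> X" for S
    unfolding pairs_def using n_subsets[of S 2] finite_subset[OF that \<open>finite X\<close>] by simp
  have "pairs (E \<inter> X) \<inter> pairs (E' \<inter> X) = {}" if "E \<in> F" "E' \<in> F" "E \<noteq> E'" for E E'
  proof (rule ccontr)
    assume "pairs (E \<inter> X) \<inter> pairs (E' \<inter> X) \<noteq> {}"
    then obtain p where "p \<subseteq> E \<inter> E'" "card p = 2" unfolding pairs_def by auto
    then have "2 \<le> card (E \<inter> E')"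
      using card_mono[of "E \<inter> E'" p] assms(3)[OF \<open>E \<in> F\<close>] by simp
    with assms(1) that show False unfolding linear_family_def by fastforce
  qed
  then have "(\<Sum>E\<in>F. card (E \<inter> X) choose 2) = card (\<Union>E\<in>F. pairs (E \<inter> X))"
    using \<open>finite F\<close> finite_pairs card_pairs by (subst card_UN_disjoint) auto
  also have "\<dots> \<le> card (pairs X)"
    using finite_pairs by (intro card_mono) (auto simp: pairs_def)
  also have "\<dots> = card X choose 2"
    using card_pairs by simp
  finally show ?thesis .
qed

lemma card_subsets_containing:
  assumes "finite M" and "S \<subseteq> M" and "card S \<le> k"
  shows "card {T. T \<subseteq> M \<and> card T = k \<and> S \<subseteq> T} = (card M - card S) choose (k - card S)"
proof -
  have "finite S"
    using assms(1,2) finite_subset by blast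
  have "{T. T \<subseteq> M \<and> card T = k \<and> S \<subseteq> T} = (\<lambda>U. U \<union> S) ` {U. U \<subseteq> M - S \<and> card U = k - card S}"
  proof (intro equalityI subsetI)
    fix T assume T: "T \<in> {T. T \<subseteq> M \<and> card T = k \<and> S \<subseteq> T}"
    then have "card (T - S) = k - card S"
      using \<open>finite S\<close> by (simp add: card_Diff_subset)
    with T show "T \<in> (\<lambda>U. U \<union> S) ` {U. U \<subseteq> M - S \<and> card U = k - card S}"
      by (intro image_eqI[of _ _ "T - S"]) auto
  next
    fix T assume "T \<in> (\<lambda>U. U \<union> S) ` {U. U \<subseteq> M - S \<and> card U = k - card S}"
    then obtain U where U: "U \<subseteq> M - S" "card U = k - card S" "T = U \<union> S"
      by blast
    then have "finite U"
      using assms(1) finite_subset by blast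
    then have "card T = k"
      using U \<open>finite S\<close> assms(3) card_Un_disjoint[of U S] by auto
    with U assms(2) show "T \<in> {T. T \<subseteq> M \<and> card T = k \<and> S \<subseteq> T}"
      by auto
  qed
  moreover have "inj_on (\<lambda>U. U \<union> S) {U. U \<subseteq> M - S \<and> card U = k - card S}"
    by (rule inj_onI) blast
  ultimately show ?thesis
    using n_subsets[of "M - S" "k - card S"] assms(1,2) \<open>finite S\<close>
    by (simp add: card_image card_Diff_subset)
qed

lemma real_choose_two: "real (m choose 2) = real m * (real m - 1) / 2"
  by (simp add: binomial_gbinomial gbinomial_prod_rev numeral_2_eq_2 lessThan_Suc)

lemma real_choose_three: "real (m choose 3) = real m * (real m - 1) * (real m - 2) / 6"
  by (simp add: binomial_gbinomial gbinomial_prod_rev numeral_3_eq_3 lessThan_Suc algebra_simps)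

lemma matching_mem_Union_iff:
  assumes "is_matching F M" and "T \<subseteq> M" and "A \<in> M" and "x \<in> A"
  shows "x \<in> \<Union>T \<longleftrightarrow> A \<in> T"
proof
  assume "x \<in> \<Union>T"
  then obtain C where "C \<in> T" and "x \<in> C"
    by blast
  with assms show "A \<in> T"
    unfolding is_matching_def by (metis IntI empty_iff subsetD)
qed (use assms(4) in blast)

lemma matching_finite:
  assumes "finite F" and "is_matching F M"
  shows "finite M"
  using assms finite_subset by (auto simp: is_matching_def)

lemma uniform3_finite:
  assumes "uniform3 F" and "E \<in> F"
  shows "finite E"
  using assms by (metis card.infinite uniform3_def zero_neq_numeral)

lemma card_XM:
  assumes "finite F" and "uniform3 F" and "is_matching F M"
  shows "card (XM M) = 3 * card M"
proof -
  have "M \<subseteq> F"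
    using assms(3) by (simp add: is_matching_def)
  then have "card (\<Union>M) = (\<Sum>A\<in>M. card A)"
    using assms uniform3_finite[OF assms(2)] by (intro card_Union_disjoint)
      (auto simp: is_matching_def pairwise_def disjnt_def)
  with \<open>M \<subseteq> F\<close> assms(2) show ?thesis
    by (simp add: XM_def uniform3_def subset_iff)
qed

lemma matching_subset_D3:
  assumes "uniform3 F" and "is_matching F M"
  shows "M \<subseteq> D 3 F M"
  using assms by (auto simp: D_def XM_def is_matching_def uniform3_def Int_absorb2 Union_upper)

lemma card_D2_add_three_card_D3_le:
  assumes "finite F" and "uniform3 F" and "linear_family F" and "is_matching F M"
  shows "card (D 2 F M) + 3 * card (D 3 F M) \<le> (3 * card M) choose 2"
proof -
  let ?X = "XM M"
  have "finite ?X"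
    using matching_finite[OF assms(1,4)] assms(4) uniform3_finite[OF assms(2)]
    by (auto simp: XM_def is_matching_def)
  have "D 2 F M \<union> D 3 F M \<subseteq> F" and "D 2 F M \<inter> D 3 F M = {}"
    by (auto simp: D_def)
  have "card (D 2 F M) + 3 * card (D 3 F M)
      = (\<Sum>E\<in>D 2 F M. card (E \<inter> ?X) choose 2) + (\<Sum>E\<in>D 3 F M. card (E \<inter> ?X) choose 2)"
    by (simp add: D_def choose_two)
  also have "\<dots> = (\<Sum>E\<in>D 2 F M \<union> D 3 F M. card (E \<inter> ?X) choose 2)"
    using assms(1) \<open>D 2 F M \<inter> D 3 F M = {}\<close>
    by (intro sum.union_disjoint[symmetric]) (auto simp: D_def)
  also have "\<dots> \<le> (\<Sum>E\<in>F. card (E \<inter> ?X) choose 2)"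
    using assms(1) \<open>D 2 F M \<union> D 3 F M \<subseteq> F\<close> by (intro sum_mono2) auto
  also have "\<dots> \<le> card ?X choose 2"
    using linear_family_sum_choose_two_le assms(1,3) uniform3_finite[OF assms(2)] \<open>finite ?X\<close>
    by blast
  finally show ?thesis
    using card_XM[OF assms(1,2,4)] by simp
qed

lemma D2_meets_two_members:
  assumes "uniform3 F" and "linear_family F" and "is_matching F M" and "E \<in> D 2 F M"
  obtains A B where "A \<in> M" and "B \<in> M" and "A \<noteq> B"
    and "\<And>T. T \<subseteq> M \<Longrightarrow> card (E \<inter> \<Union>T) = 2 \<longleftrightarrow> A \<in> T \<and> B \<in> T"
proof -
  from assms(4) obtain x y where xy: "E \<inter> XM M = {x, y}" "x \<noteq> y"
    by (auto simp: D_def card_2_iff)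
  then obtain A B where A: "A \<in> M" "x \<in> A" and B: "B \<in> M" "y \<in> B"
    unfolding XM_def by blast
  have "E \<in> F" and "A \<in> F"
    using assms(3,4) A(1) by (auto simp: D_def is_matching_def)
  have "A \<noteq> B"
  proof
    assume "A = B"
    have "E \<noteq> A"
      using assms(4) matching_subset_D3[OF assms(1,3)] A(1) by (auto simp: D_def)
    then have "card (E \<inter> A) \<le> 1"
      using assms(2) \<open>E \<in> F\<close> \<open>A \<in> F\<close> unfolding linear_family_def by blast
    moreover have "{x, y} \<subseteq> E \<inter> A"
      using xy(1) A(2) B(2) \<open>A = B\<close> by blast
    then have "card {x, y} \<le> card (E \<inter> A)"
      using uniform3_finite[OF assms(1) \<open>A \<in> F\<close>] by (intro card_mono) auto
    ultimately show False
      using xy(2) by simp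
  qed
  moreover have "card (E \<inter> \<Union>T) = 2 \<longleftrightarrow> A \<in> T \<and> B \<in> T" if "T \<subseteq> M" for T
  proof -
    have "E \<inter> \<Union>T = {x, y} \<inter> \<Union>T"
      using xy(1) that unfolding XM_def by blast
    moreover have "x \<in> \<Union>T \<longleftrightarrow> A \<in> T" and "y \<in> \<Union>T \<longleftrightarrow> B \<in> T"
      using matching_mem_Union_iff[OF assms(3) that] A B by auto
    ultimately show ?thesis
      using xy(2) by (cases "A \<in> T"; cases "B \<in> T") (simp_all add: Int_insert_left)
  qed
  ultimately show ?thesis
    using that A(1) B(1) by blast
qed

lemma sum_card_D2_over_triples:
  assumes "finite F" and "uniform3 F" and "linear_family F" and "is_matching F M"
  shows "(\<Sum>T | T \<subseteq> M \<and> card T = 3. card {E \<in> D 2 F M. card (E \<inter> \<Union>T) = 2})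
    = (card M - 2) * card (D 2 F M)"
proof (rule sum_multicount)
  have "finite M"
    using matching_finite[OF assms(1,4)] .
  then show "finite {T. T \<subseteq> M \<and> card T = 3}"
    by (auto intro: finite_subset[of _ "Pow M"])
  show "finite (D 2 F M)"
    using assms(1) by (simp add: D_def)
  show "\<forall>E\<in>D 2 F M. card {T \<in> {T. T \<subseteq> M \<and> card T = 3}. card (E \<inter> \<Union>T) = 2} = card M - 2"
  proof
    fix E assume "E \<in> D 2 F M"
    then obtain A B where AB: "A \<in> M" "B \<in> M" "A \<noteq> B"
      and iff: "\<And>T. T \<subseteq> M \<Longrightarrow> card (E \<inter> \<Union>T) = 2 \<longleftrightarrow> A \<in> T \<and> B \<in> T"
      by (rule D2_meets_two_members[OF assms(2-4)]) blast
    have "{T \<in> {T. T \<subseteq> M \<and> card T = 3}. card (E \<inter> \<Union>T) = 2}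
        = {T. T \<subseteq> M \<and> card T = 3 \<and> {A, B} \<subseteq> T}"
      using iff by blast
    also have "card \<dots> = card M - 2"
      using card_subsets_containing[of M "{A, B}" 3] \<open>finite M\<close> AB by simp
    finally show "card {T \<in> {T. T \<subseteq> M \<and> card T = 3}. card (E \<inter> \<Union>T) = 2} = card M - 2" .
  qed
qed

lemma card_D2_double_counting_le:
  assumes "finite F" and "uniform3 F" and "linear_family F" and "is_matching F M"
    and "\<And>A B C. A \<in> M \<Longrightarrow> B \<in> M \<Longrightarrow> C \<in> M \<Longrightarrow> A \<noteq> B \<Longrightarrow> A \<noteq> C \<Longrightarrow> B \<noteq> C
           \<Longrightarrow> card (D2_triple F M A B C) \<le> k"
  shows "(card M - 2) * card (D 2 F M) \<le> k * (card M choose 3)"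
proof -
  have "card {E \<in> D 2 F M. card (E \<inter> \<Union>T) = 2} \<le> k" if "T \<subseteq> M" "card T = 3" for T
  proof -
    obtain A B C where "T = {A, B, C}" "A \<noteq> B" "B \<noteq> C" "A \<noteq> C"
      using \<open>card T = 3\<close> by (auto simp: card_3_iff)
    moreover from this have "{E \<in> D 2 F M. card (E \<inter> \<Union>T) = 2} = D2_triple F M A B C"
      by (simp add: D2_triple_def Un_assoc)
    ultimately show ?thesis
      using assms(5) \<open>T \<subseteq> M\<close> by simp
  qed
  then have "(\<Sum>T | T \<subseteq> M \<and> card T = 3. card {E \<in> D 2 F M. card (E \<inter> \<Union>T) = 2})
      \<le> card {T. T \<subseteq> M \<and> card T = 3} * k"
    using sum_bounded_above[of "{T. T \<subseteq> M \<and> card T = 3}" _ k] by simp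
  then show ?thesis
    using sum_card_D2_over_triples[OF assms(1-4)] n_subsets[OF matching_finite[OF assms(1,4)], of 3]
    by (simp add: mult.commute)
qed

theorem proposition9:
  fixes F M :: "'a set set" and n :: nat
  assumes "finite F" and "uniform3 F" and "linear_family F"
    and "is_matching F M" and "n = card M" and "n \<ge> 3"
    and "\<And>A B C. A \<in> M \<Longrightarrow> B \<in> M \<Longrightarrow> C \<in> M \<Longrightarrow> A \<noteq> B \<Longrightarrow> A \<noteq> C \<Longrightarrow> B \<noteq> C
           \<Longrightarrow> card (D2_triple F M A B C) \<le> 21"
  shows "real (card (D 2 F M) + card (D 3 F M - M)) \<le> 23 / (real n - 2) * real (n choose 3)"
proof -
  have "M \<subseteq> D 3 F M" and "finite (D 3 F M)"
    using matching_subset_D3[OF assms(2,4)] assms(1) by (simp_all add: D_def)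
  then have "card (D 3 F M) = card (D 3 F M - M) + n"
    using card_Diff_subset[OF finite_subset] card_mono[of "D 3 F M" M] assms(5) by fastforce
  then have "card (D 2 F M) + 3 * card (D 3 F M - M) + 3 * n \<le> (3 * n) choose 2"
    using card_D2_add_three_card_D3_le[OF assms(1-4)] assms(5) by simp
  then have "real (card (D 2 F M) + 3 * card (D 3 F M - M) + 3 * n) \<le> real ((3 * n) choose 2)"
    by (simp only: of_nat_le_iff)
  then have pairs: "real (card (D 2 F M)) + 3 * real (card (D 3 F M - M)) \<le> 9 * real n * (real n - 1) / 2"
    by (simp add: real_choose_two algebra_simps)
  have "(n - 2) * card (D 2 F M) \<le> 21 * (n choose 3)"
    using card_D2_double_counting_le[OF assms(1-4) assms(7)] assms(5) by simp
  then have "real ((n - 2) * card (D 2 F M)) \<le> real (21 * (n choose 3))"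
    by (simp only: of_nat_le_iff)
  then have "(real n - 2) * real (card (D 2 F M)) \<le> (real n - 2) * (7 * real n * (real n - 1) / 2)"
    using assms(6) by (simp add: of_nat_diff real_choose_three algebra_simps)
  then have triples: "real (card (D 2 F M)) \<le> 7 * real n * (real n - 1) / 2"
    using assms(6) by simp
  have "23 / (real n - 2) * real (n choose 3) = 23 * real n * (real n - 1) / 6"
    using assms(6) by (simp add: real_choose_three field_simps)
  with pairs triples show ?thesis
    by simp
qed

end
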